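(* Under the hypotheses of the sequential gradient descent setting (see context), $\sum_{k=1}^\infty\gamma_k^2\|\nabla J_k(x_k)\|^2<\infty$.
   Context: $Q\in\mathbb{R}^{n\times n}$ symmetric positive semidefinite, $q\in\mathbb{R}^n$, $A\in\mathbb{R}^{n\times n}$ symmetric positive definite, $v\in\mathbb{R}^n$. $f(x)=\tfrac12 x^\top Qx+q^\top x$, $g(x)=(x-v)^\top A(x-v)$, $\mathcal{C}=\{x:g(x)\le1\}$, $\partial\mathcal{C}=\{x:g(x)=1\}$, $J_k(x)=f(x)+\frac{m}{k}g(x)^k$, $L_k=\bar\sigma(Q+m(4k-2)A)$, $r=\sqrt{\underline\sigma(A)}/\bar\sigma(A)$ ($\bar\sigma,\underline\sigma$ largest/smallest singular value). Setting: $m>0$ satisfies Requirement 2, namely with $w(x)=\nabla f(x)+m\nabla g(x)$, $\|w(x)\|^2\|\nabla g(x)\|\le 2rL_1\langle w(x),\nabla g(x)\rangle$ for all $x\in\partial\mathcal{C}$; $x_1\in\mathcal{C}$; $x_{k+1}=x_k-\gamma_k\nabla J_k(x_k)$ with $0<\gamma_k\le1/L_k$, $\sum_k\gamma_k^2<\infty$, $\sum_k\gamma_k=\infty$. *)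

theory Defs
  imports "HOL-Analysis.Analysis"
begin

definition grad :: "('a::euclidean_space \<Rightarrow> real) \<Rightarrow> 'a \<Rightarrow> 'a" where
  "grad F x = (THE d. (F has_derivative (\<lambda>h. d \<bullet> h)) (at x))"

definition sv_max :: "real^'n^'n \<Rightarrow> real" where
  "sv_max M = onorm (\<lambda>x. M *v x)"

definition sv_min :: "real^'n^'n \<Rightarrow> real" where
  "sv_min M = Inf {norm (M *v x) | x. norm x = 1}"

definition fobj :: "real^'n^'n \<Rightarrow> real^'n \<Rightarrow> real^'n \<Rightarrow> real" where
  "fobj Q q x = (1/2) * (x \<bullet> (Q *v x)) + q \<bullet> x"

definition gcon :: "real^'n^'n \<Rightarrow> real^'n \<Rightarrow> real^'n \<Rightarrow> real" where
  "gcon A v x = (x - v) \<bullet> (A *v (x - v))"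

definition Jpen :: "real^'n^'n \<Rightarrow> real^'n \<Rightarrow> real^'n^'n \<Rightarrow> real^'n \<Rightarrow> real \<Rightarrow> nat \<Rightarrow> real^'n \<Rightarrow> real" where
  "Jpen Q q A v m k x = fobj Q q x + (m / real k) * (gcon A v x) ^ k"

definition Lconst :: "real^'n^'n \<Rightarrow> real^'n^'n \<Rightarrow> real \<Rightarrow> nat \<Rightarrow> real" where
  "Lconst Q A m k = sv_max (Q + (m * (4 * real k - 2)) *\<^sub>R A)"

definition rconst :: "real^'n^'n \<Rightarrow> real" where
  "rconst A = sqrt (sv_min A) / sv_max A"

end

theory Submission
  imports Defs "HOL-Homology.Invariance_of_Domain"
begin

text \<open>The gradients are bounded uniformly in \<open>k\<close> on the compact ellipsoid
  \<open>C = {g \<le> 1}\<close>, so the claim reduces to showing that every iterate stays in \<open>C\<close>.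
  For a step \<open>T y = y - \<tau> \<nabla>J\<^sub>k y\<close> with \<open>\<tau> L\<^sub>k < 1\<close>, the one-sided Lipschitz bound
  \<open>\<langle>\<nabla>J\<^sub>k y - \<nabla>J\<^sub>k y', y - y'\<rangle> \<le> L\<^sub>k \<parallel>y - y'\<parallel>\<^sup>2\<close> on \<open>C\<close> makes \<open>T\<close> injective there.
  Maximise \<open>g \<circ> T\<close> over \<open>C\<close>: at a boundary maximiser Requirement 2 keeps the step
  inside \<open>C\<close>; at an interior maximiser \<open>y\<close>, invariance of domain makes \<open>T y\<close> an
  interior point of \<open>T C\<close>, and pushing it radially away from the centre \<open>v\<close>
  would increase \<open>g\<close>, so \<open>g (T y) = 0\<close>. The borderline step \<open>\<tau> = 1/L\<^sub>k\<close>
  follows by closedness.\<close>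

lemma symmetric_matrix_inner_commute:
  fixes M :: "real^'n^'n"
  assumes "transpose M = M"
  shows "x \<bullet> (M *v y) = y \<bullet> (M *v x)"
  by (metis assms dot_lmul_matrix vector_transpose_matrix inner_commute)

lemma matrix_add_scaleR_vector:
  fixes Q A :: "real^'n^'n"
  shows "(Q + c *\<^sub>R A) *v x = Q *v x + c *\<^sub>R (A *v x)"
  by (simp add: matrix_vector_mult_add_rdistrib scaleR_matrix_vector_assoc)

lemma quadratic_form_scaleR:
  fixes A :: "real^'n^'n"
  shows "(t *\<^sub>R y) \<bullet> (A *v (t *\<^sub>R y)) = t\<^sup>2 * (y \<bullet> (A *v y))"
  by (simp add: matrix_vector_mult_scaleR power2_eq_square)

lemma norm_matrix_vector_le_sv_max: "norm (M *v x) \<le> sv_max M * norm x"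
  unfolding sv_max_def by (rule onorm[OF matrix_vector_mul_bounded_linear])

lemma sv_max_nonneg: "0 \<le> sv_max M"
  unfolding sv_max_def by (rule onorm_pos_le[OF matrix_vector_mul_bounded_linear])

lemma quadratic_form_le_sv_max: "x \<bullet> (M *v x) \<le> sv_max M * (norm x)\<^sup>2"
proof -
  have "x \<bullet> (M *v x) \<le> norm x * norm (M *v x)" by (rule norm_cauchy_schwarz)
  also have "\<dots> \<le> norm x * (sv_max M * norm x)"
    by (simp add: mult_left_mono norm_matrix_vector_le_sv_max)
  finally show ?thesis by (simp add: power2_eq_square mult_ac)
qed

lemma sv_min_nonneg: "0 \<le> sv_min M"
proof -
  have "{norm (M *v x) | x. norm x = 1} \<noteq> {}" using norm_axis_1 by blast
  then show ?thesis unfolding sv_min_def by (rule cInf_greatest) auto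
qed

lemma sv_min_mult_norm_le: "sv_min M * norm u \<le> norm (M *v u)"
proof (cases "u = 0")
  case False
  define S where "S = {norm (M *v x) | x. norm x = 1}"
  have "norm ((1 / norm u) *\<^sub>R u) = 1" using False by simp
  then have "norm (M *v ((1 / norm u) *\<^sub>R u)) \<in> S" unfolding S_def by blast
  moreover have "bdd_below S" unfolding S_def by (rule bdd_belowI[of _ 0]) auto
  ultimately have "sv_min M \<le> norm (M *v ((1 / norm u) *\<^sub>R u))"
    unfolding sv_min_def S_def[symmetric] by (rule cInf_lower)
  also have "\<dots> = norm (M *v u) / norm u"
    by (simp add: matrix_vector_mult_scaleR divide_inverse mult.commute)
  finally show ?thesis using False by (simp add: field_simps)
qed simp

lemma psd_form_cauchy_schwarz:
  fixes M :: "real^'n^'n"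
  assumes sym: "\<And>x y. x \<bullet> (M *v y) = y \<bullet> (M *v x)"
    and psd: "\<And>y. 0 \<le> y \<bullet> (M *v y)"
  shows "(y \<bullet> (M *v x))\<^sup>2 \<le> (y \<bullet> (M *v y)) * (x \<bullet> (M *v x))"
proof -
  define a b c where "a = y \<bullet> (M *v y)" and "b = y \<bullet> (M *v x)" and "c = x \<bullet> (M *v x)"
  have quad: "0 \<le> c + 2 * t * b + t\<^sup>2 * a" for t
  proof -
    have "0 \<le> (x + t *\<^sub>R y) \<bullet> (M *v (x + t *\<^sub>R y))" by (rule psd)
    also have "\<dots> = c + t * (x \<bullet> (M *v y)) + t * b + t\<^sup>2 * a"
      by (simp add: a_def b_def c_def matrix_vector_right_distrib matrix_vector_mult_scaleR
          inner_add_left inner_add_right power2_eq_square algebra_simps)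
    also have "x \<bullet> (M *v y) = b" using sym b_def by simp
    finally show ?thesis by (simp add: algebra_simps)
  qed
  have "a \<ge> 0" using psd a_def by simp
  then consider "a = 0" | "a > 0" by linarith
  then have "b\<^sup>2 \<le> a * c"
  proof cases
    case 1
    have "b = 0"
    proof (rule ccontr)
      assume "b \<noteq> 0"
      with 1 quad[of "- (c + 1) / (2 * b)"] show False by (simp add: field_simps)
    qed
    then show ?thesis using 1 by simp
  next
    case 2
    with quad[of "- b / a"] show ?thesis by (simp add: field_simps power2_eq_square)
  qed
  then show ?thesis by (simp add: a_def b_def c_def)
qed

text \<open>Cauchy--Schwarz for \<open>M\<close> with \<open>y = M x\<close> gives \<open>\<parallel>M x\<parallel>\<^sup>4 \<le> (y \<bullet> M y) (x \<bullet> M x)\<close>,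
  and both factors are bounded through \<open>M'\<close>.\<close>
lemma sv_max_mono_psd:
  fixes M M' :: "real^'n^'n"
  assumes sym: "\<And>x y. x \<bullet> (M *v y) = y \<bullet> (M *v x)"
    and psd: "\<And>y. 0 \<le> y \<bullet> (M *v y)"
    and le: "\<And>y. y \<bullet> (M *v y) \<le> y \<bullet> (M' *v y)"
  shows "sv_max M \<le> sv_max M'"
proof -
  define L where "L = sv_max M'"
  have L0: "0 \<le> L" using sv_max_nonneg L_def by simp
  have form_le: "z \<bullet> (M *v z) \<le> L * (norm z)\<^sup>2" for z
    using le[of z] quadratic_form_le_sv_max[of z M'] unfolding L_def by linarith
  have "norm (M *v x) \<le> L * norm x" for x
  proof -
    define y where "y = M *v x"
    have "((norm y)\<^sup>2)\<^sup>2 = (y \<bullet> (M *v x))\<^sup>2" by (simp add: y_def power2_norm_eq_inner)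
    also have "\<dots> \<le> (y \<bullet> (M *v y)) * (x \<bullet> (M *v x))" by (rule psd_form_cauchy_schwarz[OF sym psd])
    also have "\<dots> \<le> (L * (norm y)\<^sup>2) * (L * (norm x)\<^sup>2)"
      using L0 by (intro mult_mono form_le psd) simp_all
    finally have "(norm y)\<^sup>2 * (norm y)\<^sup>2 \<le> (L * norm x)\<^sup>2 * (norm y)\<^sup>2"
      by (simp add: power2_eq_square mult_ac)
    then have "y = 0 \<or> (norm y)\<^sup>2 \<le> (L * norm x)\<^sup>2"
      using mult_right_le_imp_le[where c = "(norm y)\<^sup>2"]
      by (metis norm_eq_zero zero_less_power2)
    then show ?thesis using L0 by (auto simp: y_def intro: power2_le_imp_le)
  qed
  then show ?thesis unfolding sv_max_def L_def by (rule onorm_le)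
qed

lemma pd_imp_psd:
  fixes A :: "real^'n^'n"
  assumes "\<forall>y. y \<noteq> 0 \<longrightarrow> 0 < y \<bullet> (A *v y)"
  shows "0 \<le> y \<bullet> (A *v y)"
  using assms by (cases "y = 0") (auto intro: less_imp_le)

lemma pd_form_coercive:
  fixes A :: "real^'n^'n"
  assumes pd: "\<forall>y. y \<noteq> 0 \<longrightarrow> 0 < y \<bullet> (A *v y)"
  obtains c where "c > 0" "\<And>y. c * (norm y)\<^sup>2 \<le> y \<bullet> (A *v y)"
proof -
  have cont: "continuous_on (sphere 0 1) (\<lambda>y. y \<bullet> (A *v y))"
    by (intro continuous_on_inner continuous_on_id linear_continuous_on
        matrix_vector_mul_bounded_linear)
  have "sphere (0::real^'n) 1 \<noteq> {}" using norm_axis_1 by (metis dist_0_norm mem_sphere empty_iff)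
  then obtain y0 where y0: "norm y0 = 1" "\<And>y. norm y = 1 \<Longrightarrow> y0 \<bullet> (A *v y0) \<le> y \<bullet> (A *v y)"
    using continuous_attains_inf[OF compact_sphere _ cont] by auto
  have "y0 \<bullet> (A *v y0) * (norm y)\<^sup>2 \<le> y \<bullet> (A *v y)" for y
  proof (cases "y = 0")
    case False
    have "y0 \<bullet> (A *v y0) \<le> ((1 / norm y) *\<^sub>R y) \<bullet> (A *v ((1 / norm y) *\<^sub>R y))"
      using False by (intro y0(2)) simp
    also have "\<dots> = (y \<bullet> (A *v y)) / (norm y)\<^sup>2"
      by (simp only: quadratic_form_scaleR) (simp add: power_one_over)
    finally show ?thesis using False by (simp add: field_simps)
  qed simp
  moreover have "y0 \<noteq> 0" using y0(1) by auto
  then have "0 < y0 \<bullet> (A *v y0)" using pd by blast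
  ultimately show ?thesis using that by blast
qed

lemma grad_eqI:
  fixes F :: "'a::euclidean_space \<Rightarrow> real"
  assumes "(F has_derivative (\<lambda>h. d \<bullet> h)) (at x)"
  shows "grad F x = d"
  unfolding grad_def
proof (rule the_equality)
  fix d' assume "(F has_derivative (\<lambda>h. d' \<bullet> h)) (at x)"
  then have "(\<lambda>h. d' \<bullet> h) = (\<lambda>h. d \<bullet> h)" using has_derivative_unique assms by blast
  then have "(d' - d) \<bullet> (d' - d) = 0" by (metis inner_diff_left right_minus_eq)
  then show "d' = d" by simp
qed (rule assms)

lemma gcon_has_derivative:
  assumes "transpose A = A"
  shows "(gcon A v has_derivative (\<lambda>h. (2 *\<^sub>R (A *v (x - v))) \<bullet> h)) (at x)"
proof -
  have d: "((\<lambda>y. y - v) has_derivative (\<lambda>h. h)) (at x)"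
    by (auto intro!: derivative_eq_intros)
  have "(gcon A v has_derivative (\<lambda>h. (x - v) \<bullet> (A *v h) + h \<bullet> (A *v (x - v)))) (at x)"
    unfolding gcon_def
    by (rule has_derivative_inner[OF d bounded_linear.has_derivative[OF matrix_vector_mul_bounded_linear d]])
  moreover have "(x - v) \<bullet> (A *v h) + h \<bullet> (A *v (x - v)) = (2 *\<^sub>R (A *v (x - v))) \<bullet> h" for h
    using symmetric_matrix_inner_commute[OF assms, of "x - v" h] by (simp add: inner_commute)
  ultimately show ?thesis by simp
qed

lemma fobj_has_derivative:
  assumes "transpose Q = Q"
  shows "(fobj Q q has_derivative (\<lambda>h. (Q *v x + q) \<bullet> h)) (at x)"
proof -
  have "fobj Q q = (\<lambda>y. (1/2) * gcon Q 0 y + q \<bullet> y)"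
    by (simp add: fun_eq_iff fobj_def gcon_def)
  moreover have "((\<lambda>y. (1/2) * gcon Q 0 y + q \<bullet> y) has_derivative
      (\<lambda>h. (1/2) * ((2 *\<^sub>R (Q *v (x - 0))) \<bullet> h) + q \<bullet> h)) (at x)"
    by (intro has_derivative_add has_derivative_mult_right gcon_has_derivative[OF assms]
        has_derivative_inner_right has_derivative_ident)
  ultimately show ?thesis by (simp add: inner_add_left)
qed

lemma grad_fobj: "transpose Q = Q \<Longrightarrow> grad (fobj Q q) x = Q *v x + q"
  by (rule grad_eqI[OF fobj_has_derivative])

lemma grad_gcon: "transpose A = A \<Longrightarrow> grad (gcon A v) x = 2 *\<^sub>R (A *v (x - v))"
  by (rule grad_eqI[OF gcon_has_derivative])

definition Jgrad :: "real^'n^'n \<Rightarrow> real^'n \<Rightarrow> real^'n^'n \<Rightarrow> real^'n \<Rightarrow> real \<Rightarrow> nat \<Rightarrow> real^'n \<Rightarrow> real^'n" where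
  "Jgrad Q q A v m k x = Q *v x + q + (2 * m * gcon A v x ^ (k - 1)) *\<^sub>R (A *v (x - v))"

lemma grad_Jpen:
  assumes "transpose Q = Q" "transpose A = A" "k \<ge> 1"
  shows "grad (Jpen Q q A v m k) x = Jgrad Q q A v m k x"
proof (rule grad_eqI)
  have "(Jpen Q q A v m k has_derivative (\<lambda>h. (Q *v x + q) \<bullet> h
      + (m / real k) * (of_nat k * ((2 *\<^sub>R (A *v (x - v))) \<bullet> h) * gcon A v x ^ (k - 1)))) (at x)"
    unfolding Jpen_def[abs_def]
    by (intro has_derivative_add has_derivative_mult_right has_derivative_power
        fobj_has_derivative gcon_has_derivative assms)
  then show "(Jpen Q q A v m k has_derivative (\<lambda>h. Jgrad Q q A v m k x \<bullet> h)) (at x)"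
    using assms(3) by (simp add: Jgrad_def inner_add_left field_simps)
qed

lemma isCont_gcon:
  fixes A :: "real^'n^'n"
  shows "isCont (gcon A v) y"
  unfolding gcon_def matrix_vector_mult_diff_distrib
  by (intro continuous_intros linear_continuous_at matrix_vector_mul_bounded_linear)

lemma isCont_Jgrad: "isCont (Jgrad Q q A v m k) y"
  unfolding Jgrad_def[abs_def] matrix_vector_mult_diff_distrib
  by (intro continuous_intros isCont_gcon linear_continuous_at matrix_vector_mul_bounded_linear)

lemma power_diff_mult_le:
  fixes a b :: real
  assumes a: "0 \<le> a" "a \<le> 1" and b: "0 \<le> b" "b \<le> 1"
  shows "(a^n - b^n) * (a - b) \<le> real n * (a - b)\<^sup>2"
proof -
  have "0 \<le> (a^n - b^n) * (a - b) \<and> (a^n - b^n) * (a - b) \<le> real n * (a - b)\<^sup>2"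
  proof (induction n)
    case (Suc n)
    define X where "X = (a^n - b^n) * (a - b)"
    have split: "(a^Suc n - b^Suc n) * (a - b) = a * X + b^n * (a - b)\<^sup>2"
      by (simp add: X_def power2_eq_square algebra_simps)
    have "0 \<le> X" "X \<le> real n * (a - b)\<^sup>2" using Suc.IH by (simp_all add: X_def)
    moreover have "b^n * (a - b)\<^sup>2 \<le> (a - b)\<^sup>2" using b by (simp add: mult_left_le_one_le power_le_one)
    moreover have "a * X \<le> X" using a \<open>0 \<le> X\<close> by (simp add: mult_left_le_one_le)
    moreover have "0 \<le> a * X" "0 \<le> b^n * (a - b)\<^sup>2" using a b \<open>0 \<le> X\<close> by simp_all
    ultimately show ?case unfolding split of_nat_Suc distrib_right by linarith
  qed simp
  then show ?thesis ..
qed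

text \<open>For \<open>a\<^sup>2 = g x\<close>, \<open>b\<^sup>2 = g x'\<close> and \<open>t = (x' - v) \<bullet> A (x - v)\<close> this bounds the penalty part
  of \<open>\<langle>\<nabla>J\<^sub>k x - \<nabla>J\<^sub>k x', x - x'\<rangle>\<close>; the hypothesis \<open>t \<le> a b\<close> is Cauchy--Schwarz for \<open>A\<close>.\<close>
lemma penalty_scalar_inequality:
  fixes a b t :: real
  assumes a: "0 \<le> a" "a \<le> 1" and b: "0 \<le> b" "b \<le> 1" and t: "t \<le> a * b" and k: "k \<ge> 1"
  shows "(a\<^sup>2)^(k-1) * (a\<^sup>2 - t) - (b\<^sup>2)^(k-1) * (t - b\<^sup>2) \<le> (2 * real k - 1) * (a\<^sup>2 - 2*t + b\<^sup>2)"
proof -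
  obtain j where j: "k = Suc j" using k by (cases k) auto
  define \<alpha> \<beta> n where "\<alpha> = (a\<^sup>2)^j" and "\<beta> = (b\<^sup>2)^j" and "n = 2 * real j + 1"
  have \<alpha>: "0 \<le> \<alpha>" "\<alpha> \<le> 1" using a by (auto simp: \<alpha>_def power_le_one)
  have \<beta>: "0 \<le> \<beta>" "\<beta> \<le> 1" using b by (auto simp: \<beta>_def power_le_one)
  have "(a * \<alpha> - b * \<beta>) * (a - b) \<le> n * (a - b)\<^sup>2"
    using power_diff_mult_le[OF a b, of "Suc (2 * j)"]
    by (simp add: \<alpha>_def \<beta>_def n_def power_mult add.commute)
  then have "0 \<le> n * (a\<^sup>2 + b\<^sup>2) - \<alpha> * a\<^sup>2 - \<beta> * b\<^sup>2 - a * b * (2*n - \<alpha> - \<beta>)"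
    by (simp add: power2_eq_square algebra_simps)
  moreover have "t * (2*n - \<alpha> - \<beta>) \<le> a * b * (2*n - \<alpha> - \<beta>)"
    using t \<alpha> \<beta> by (intro mult_right_mono) (auto simp: n_def)
  ultimately have "\<alpha> * (a\<^sup>2 - t) - \<beta> * (t - b\<^sup>2) \<le> n * (a\<^sup>2 - 2*t + b\<^sup>2)"
    by (simp add: algebra_simps)
  then show ?thesis by (simp add: j \<alpha>_def \<beta>_def n_def add.commute)
qed
lemma Jgrad_one_sided_lipschitz:
  fixes Q A :: "real^'n^'n"
  assumes Q_sym: "transpose Q = Q" and A_sym: "transpose A = A"
    and A_pd: "\<forall>y. y \<noteq> 0 \<longrightarrow> 0 < y \<bullet> (A *v y)"
    and m: "0 \<le> m" and k: "k \<ge> 1"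
    and gx: "gcon A v x \<le> 1" and gx': "gcon A v x' \<le> 1"
  shows "(Jgrad Q q A v m k x - Jgrad Q q A v m k x') \<bullet> (x - x') \<le> Lconst Q A m k * (norm (x - x'))\<^sup>2"
proof -
  define u u' d where "u = x - v" and "u' = x' - v" and "d = x - x'"
  define s s' t where "s = gcon A v x" and "s' = gcon A v x'" and "t = u' \<bullet> (A *v u)"
  note symA = symmetric_matrix_inner_commute[OF A_sym]
  have psdA: "\<And>y. 0 \<le> y \<bullet> (A *v y)" by (rule pd_imp_psd[OF A_pd])
  have s: "s = u \<bullet> (A *v u)" "0 \<le> s" "s \<le> 1"
    using psdA gx by (auto simp: s_def u_def gcon_def)
  have s': "s' = u' \<bullet> (A *v u')" "0 \<le> s'" "s' \<le> 1"
    using psdA gx' by (auto simp: s'_def u'_def gcon_def)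
  have du: "d = u - u'" by (simp add: d_def u_def u'_def)
  have dAu: "d \<bullet> (A *v u) = s - t" using s(1) by (simp add: du t_def inner_diff_left)
  have dAu': "d \<bullet> (A *v u') = t - s'" using s'(1) symA[of u u'] by (simp add: du t_def inner_diff_left)
  have dAd: "d \<bullet> (A *v d) = s - 2 * t + s'"
    using s(1) s'(1) symA[of u u']
    by (simp add: du t_def inner_diff_left inner_diff_right matrix_vector_mult_diff_distrib)
  have "Jgrad Q q A v m k x - Jgrad Q q A v m k x'
      = Q *v d + (2 * m * s^(k-1)) *\<^sub>R (A *v u) - (2 * m * s'^(k-1)) *\<^sub>R (A *v u')"
    by (simp add: Jgrad_def s_def s'_def u_def u'_def d_def matrix_vector_mult_diff_distrib algebra_simps)
  also have "\<dots> \<bullet> d = d \<bullet> (Q *v d) + 2 * m * (s^(k-1) * (s - t) - s'^(k-1) * (t - s'))"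
    unfolding dAu[symmetric] dAu'[symmetric]
    by (simp add: inner_diff_left inner_add_left inner_commute[of "Q *v d" d]
        inner_commute[of "A *v u" d] inner_commute[of "A *v u'" d] algebra_simps)
  also have "\<dots> \<le> d \<bullet> (Q *v d) + 2 * m * ((2 * real k - 1) * (s - 2*t + s'))"
  proof -
    have "t\<^sup>2 \<le> s' * s"
      using psd_form_cauchy_schwarz[OF symA psdA, of u' u] s(1) s'(1) by (simp add: t_def)
    then have "t \<le> sqrt s * sqrt s'"
      by (metis abs_ge_self order_trans real_sqrt_abs real_sqrt_le_mono real_sqrt_mult mult.commute)
    then have "((sqrt s)\<^sup>2)^(k-1) * ((sqrt s)\<^sup>2 - t) - ((sqrt s')\<^sup>2)^(k-1) * (t - (sqrt s')\<^sup>2)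
        \<le> (2 * real k - 1) * ((sqrt s)\<^sup>2 - 2*t + (sqrt s')\<^sup>2)"
      using s s' k by (intro penalty_scalar_inequality) auto
    then show ?thesis using s s' m by (simp add: mult_left_mono)
  qed
  also have "\<dots> = d \<bullet> ((Q + (m * (4 * real k - 2)) *\<^sub>R A) *v d)"
    unfolding matrix_add_scaleR_vector inner_add_right inner_scaleR_right dAd
    by (simp add: algebra_simps)
  also have "\<dots> \<le> Lconst Q A m k * (norm d)\<^sup>2"
    unfolding Lconst_def by (rule quadratic_form_le_sv_max)
  finally show ?thesis by (simp add: d_def)
qed

lemma gcon_nonneg:
  assumes "\<forall>y. y \<noteq> 0 \<longrightarrow> 0 < y \<bullet> (A *v y)"
  shows "0 \<le> gcon A v x"
  unfolding gcon_def by (rule pd_imp_psd[OF assms])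

lemma gcon_sublevel_bounded:
  fixes A :: "real^'n^'n"
  assumes "\<forall>y. y \<noteq> 0 \<longrightarrow> 0 < y \<bullet> (A *v y)"
  obtains R where "\<And>y. gcon A v y \<le> 1 \<Longrightarrow> norm (y - v) \<le> R"
proof -
  obtain c where c: "c > 0" "\<And>y. c * (norm y)\<^sup>2 \<le> y \<bullet> (A *v y)"
    using pd_form_coercive[OF assms] by blast
  have "norm (y - v) \<le> sqrt (1 / c)" if "gcon A v y \<le> 1" for y
  proof (rule real_le_rsqrt)
    have "c * (norm (y - v))\<^sup>2 \<le> 1" using c(2)[of "y - v"] that by (simp add: gcon_def)
    then show "(norm (y - v))\<^sup>2 \<le> 1 / c" using c(1) by (simp add: field_simps)
  qed
  then show ?thesis using that by blast
qed

lemma compact_gcon_sublevel: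
  fixes A :: "real^'n^'n"
  assumes "\<forall>y. y \<noteq> 0 \<longrightarrow> 0 < y \<bullet> (A *v y)"
  shows "compact {y. gcon A v y \<le> 1}"
proof -
  obtain R where R: "\<And>y. gcon A v y \<le> 1 \<Longrightarrow> norm (y - v) \<le> R"
    using gcon_sublevel_bounded[OF assms] by blast
  have "{y. gcon A v y \<le> 1} \<subseteq> cball v R" using R by (auto simp: dist_norm norm_minus_commute)
  then have "bounded {y. gcon A v y \<le> 1}" by (rule bounded_subset[OF bounded_cball])
  moreover have "closed {y. gcon A v y \<le> 1}"
    by (rule closed_Collect_le) (auto intro!: continuous_at_imp_continuous_on isCont_gcon)
  ultimately show ?thesis by (simp add: compact_eq_bounded_closed)
qed

lemma Jgrad_bounded_on_sublevel:
  fixes Q A :: "real^'n^'n"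
  assumes A_pd: "\<forall>y. y \<noteq> 0 \<longrightarrow> 0 < y \<bullet> (A *v y)"
  obtains B where "\<And>k y. gcon A v y \<le> 1 \<Longrightarrow> norm (Jgrad Q q A v m k y) \<le> B"
proof -
  obtain R where R: "\<And>y. gcon A v y \<le> 1 \<Longrightarrow> norm (y - v) \<le> R"
    using gcon_sublevel_bounded[OF A_pd] by blast
  have "norm (Jgrad Q q A v m k y) \<le> sv_max Q * (norm v + R) + norm q + 2 * \<bar>m\<bar> * (sv_max A * R)"
    if gy: "gcon A v y \<le> 1" for k y
  proof -
    have "norm y \<le> norm v + R" using R[OF gy] norm_triangle_sub[of y v] by linarith
    then have Qy: "norm (Q *v y) \<le> sv_max Q * (norm v + R)"
      using norm_matrix_vector_le_sv_max[of Q y] sv_max_nonneg[of Q] by (meson mult_left_mono order_trans)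
    have Ay: "norm (A *v (y - v)) \<le> sv_max A * R"
      using norm_matrix_vector_le_sv_max[of A "y - v"] R[OF gy] sv_max_nonneg[of A]
      by (meson mult_left_mono order_trans)
    have "\<bar>gcon A v y ^ (k - 1)\<bar> \<le> 1"
      using gcon_nonneg[OF A_pd] gy by (simp add: power_le_one)
    then have "\<bar>gcon A v y ^ (k - 1)\<bar> * norm (A *v (y - v)) \<le> 1 * (sv_max A * R)"
      using Ay by (intro mult_mono) auto
    then have "\<bar>2 * m * gcon A v y ^ (k - 1)\<bar> * norm (A *v (y - v)) \<le> 2 * \<bar>m\<bar> * (sv_max A * R)"
      by (simp add: abs_mult mult_left_mono mult.assoc)
    then show ?thesis
      using Qy norm_triangle_ineq[of "Q *v y + q" "(2 * m * gcon A v y ^ (k - 1)) *\<^sub>R (A *v (y - v))"]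
        norm_triangle_ineq[of "Q *v y" q]
      unfolding Jgrad_def norm_scaleR by linarith
  qed
  then show ?thesis using that by blast
qed

lemma sqrt_sv_min_le_norm:
  fixes A :: "real^'n^'n"
  assumes "u \<bullet> (A *v u) = 1"
  shows "sqrt (sv_min A) \<le> norm (A *v u)"
proof -
  have "sv_min A = sv_min A * 1" by simp
  also have "\<dots> \<le> sv_min A * (norm u * norm (A *v u))"
    using assms norm_cauchy_schwarz[of u "A *v u"] sv_min_nonneg by (intro mult_left_mono) auto
  also have "\<dots> \<le> norm (A *v u) * norm (A *v u)"
    by (simp add: mult.assoc[symmetric] mult_right_mono sv_min_mult_norm_le)
  finally show ?thesis by (intro real_le_lsqrt) (simp_all add: power2_eq_square)
qed

lemma gcon_step_expansion:
  fixes A :: "real^'n^'n"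
  assumes "transpose A = A"
  shows "gcon A v (z - \<gamma> *\<^sub>R w) = gcon A v z - \<gamma> * (w \<bullet> 2 *\<^sub>R (A *v (z - v))) + \<gamma>\<^sup>2 * (w \<bullet> (A *v w))"
proof -
  have "z - \<gamma> *\<^sub>R w - v = (z - v) - \<gamma> *\<^sub>R w" by (simp add: algebra_simps)
  then have "gcon A v (z - \<gamma> *\<^sub>R w) = ((z - v) - \<gamma> *\<^sub>R w) \<bullet> (A *v ((z - v) - \<gamma> *\<^sub>R w))"
    by (simp only: gcon_def)
  also have "\<dots> = (z - v) \<bullet> (A *v (z - v)) - \<gamma> * ((z - v) \<bullet> (A *v w)) - \<gamma> * (w \<bullet> (A *v (z - v)))
      + \<gamma>\<^sup>2 * (w \<bullet> (A *v w))"
    by (simp only: matrix_vector_mult_diff_distrib matrix_vector_mult_scaleR inner_diff_left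
        inner_diff_right inner_scaleR_left inner_scaleR_right power2_eq_square) (simp add: algebra_simps)
  finally show ?thesis
    using symmetric_matrix_inner_commute[OF assms, of "z - v" w] by (simp add: gcon_def)
qed

text \<open>A boundary step stays in the ellipsoid iff \<open>\<gamma>\<^sup>2 w \<bullet> A w \<le> \<gamma> w \<bullet> \<nabla>g\<close>. Since
  \<open>\<parallel>\<nabla>g\<parallel> \<ge> 2 \<sigma>\<^sub>m\<^sub>i\<^sub>n(A)\<^sup>1\<^sup>/\<^sup>2\<close> on the boundary, the requirement gives
  \<open>\<gamma> \<sigma>\<^sub>m\<^sub>a\<^sub>x(A) \<parallel>w\<parallel>\<^sup>2 \<le> w \<bullet> \<nabla>g\<close>, which is enough.\<close>
lemma boundary_step_gcon_le_1:
  fixes A :: "real^'n^'n" and w z v :: "real^'n"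
  assumes A_sym: "transpose A = A"
    and gz: "gcon A v z = 1"
    and req: "(norm w)\<^sup>2 * norm (2 *\<^sub>R (A *v (z - v))) \<le> 2 * rconst A * L * (w \<bullet> (2 *\<^sub>R (A *v (z - v))))"
    and L: "0 \<le> L" and \<gamma>: "0 \<le> \<gamma>" "\<gamma> * L \<le> 1"
  shows "gcon A v (z - \<gamma> *\<^sub>R w) \<le> 1"
proof -
  define u n where "u = z - v" and "n = 2 *\<^sub>R (A *v (z - v))"
  define \<sigma> where "\<sigma> = sv_max A"
  have uAu: "u \<bullet> (A *v u) = 1" using gz by (simp add: gcon_def u_def)
  have \<sigma>0: "0 \<le> \<sigma>" using sv_max_nonneg \<sigma>_def by simp
  have norm_n: "2 * sqrt (sv_min A) \<le> norm n" using sqrt_sv_min_le_norm[OF uAu] by (simp add: n_def u_def)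
  have r0: "0 \<le> rconst A" unfolding rconst_def using sv_min_nonneg[of A] sv_max_nonneg[of A] by simp
  have Au: "0 < norm (A *v u)" using uAu by auto
  then have n0: "0 < norm n" by (simp add: n_def u_def)
  have "0 < \<sigma>"
    using Au norm_matrix_vector_le_sv_max[of A u] \<sigma>0 by (auto simp: \<sigma>_def intro: ccontr)
  then have rs: "rconst A * \<sigma> = sqrt (sv_min A)" by (simp add: rconst_def \<sigma>_def)
  have claim: "\<gamma> * \<sigma> * (norm w)\<^sup>2 \<le> w \<bullet> n"
  proof (cases "w = 0")
    case False
    with n0 have "0 < (norm w)\<^sup>2 * norm n" by simp
    with req L r0 have wn: "0 < w \<bullet> n"
      unfolding n_def by (smt (verit) mult_nonneg_nonpos zero_le_mult_iff)
    have "(\<gamma> * \<sigma> * (norm w)\<^sup>2) * norm n \<le> \<gamma> * \<sigma> * (2 * rconst A * L * (w \<bullet> n))"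
      using req \<gamma> \<sigma>0 by (simp add: mult_left_mono n_def mult.assoc)
    also have "\<dots> = (\<gamma> * L) * (2 * sqrt (sv_min A)) * (w \<bullet> n)" using rs by (simp add: algebra_simps)
    also have "\<dots> \<le> 1 * norm n * (w \<bullet> n)"
      using \<gamma> L wn norm_n sv_min_nonneg[of A] by (intro mult_right_mono mult_mono) auto
    finally show ?thesis using n0 by (simp add: mult.commute)
  qed simp
  have "gcon A v (z - \<gamma> *\<^sub>R w) = 1 - \<gamma> * (w \<bullet> n) + \<gamma>\<^sup>2 * (w \<bullet> (A *v w))"
    using gcon_step_expansion[OF A_sym] gz by (simp add: n_def)
  also have "\<gamma>\<^sup>2 * (w \<bullet> (A *v w)) \<le> \<gamma> * (\<gamma> * \<sigma> * (norm w)\<^sup>2)"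
    using quadratic_form_le_sv_max[of w A] \<gamma> by (simp add: \<sigma>_def power2_eq_square mult_left_mono mult.assoc)
  also have "\<dots> \<le> \<gamma> * (w \<bullet> n)" using claim \<gamma> by (simp add: mult_left_mono)
  finally show ?thesis by simp
qed

lemma gcon_le_0_at_interior_max:
  fixes A :: "real^'n^'n"
  assumes p: "p \<in> interior S" and max: "\<And>y. y \<in> S \<Longrightarrow> gcon A v y \<le> gcon A v p"
  shows "gcon A v p \<le> 0"
proof -
  obtain e where e: "e > 0" "ball p e \<subseteq> S" using p by (auto simp: mem_interior)
  define \<delta> where "\<delta> = e / (2 * (norm (p - v) + 1))"
  have pos: "0 < 2 * (norm (p - v) + 1)" by (simp add: add_nonneg_pos)
  then have \<delta>_pos: "0 < \<delta>" using e(1) by (simp add: \<delta>_def)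
  have "norm (p - v) / (2 * (norm (p - v) + 1)) < 1" using pos by (simp add: field_simps)
  then have "e * (norm (p - v) / (2 * (norm (p - v) + 1))) < e * 1"
    by (rule mult_strict_left_mono[OF _ e(1)])
  then have \<delta>_small: "\<delta> * norm (p - v) < e" by (simp add: \<delta>_def)
  define p' where "p' = p + \<delta> *\<^sub>R (p - v)"
  have "p' \<in> S" using e(2) \<delta>_pos \<delta>_small by (auto simp: p'_def dist_norm)
  then have "gcon A v p' \<le> gcon A v p" by (rule max)
  moreover have "p' - v = (1 + \<delta>) *\<^sub>R (p - v)" by (simp add: p'_def algebra_simps)
  then have "gcon A v p' = (1 + \<delta>)\<^sup>2 * gcon A v p"
    by (simp only: gcon_def quadratic_form_scaleR)
  moreover have "1 < (1 + \<delta>)\<^sup>2" using \<delta>_pos by (simp add: power_less_one_iff one_less_power)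
  ultimately show ?thesis by (smt (verit) mult_le_cancel_right2)
qed

lemma inj_on_gradient_step:
  fixes D :: "'a::real_inner \<Rightarrow> 'a"
  assumes lip: "\<And>y y'. y \<in> S \<Longrightarrow> y' \<in> S \<Longrightarrow> (D y - D y') \<bullet> (y - y') \<le> L * (norm (y - y'))\<^sup>2"
    and \<tau>: "0 \<le> \<tau>" "\<tau> * L < 1"
  shows "inj_on (\<lambda>y. y - \<tau> *\<^sub>R D y) S"
proof (rule inj_onI)
  fix y y' assume y: "y \<in> S" "y' \<in> S" and eq: "y - \<tau> *\<^sub>R D y = y' - \<tau> *\<^sub>R D y'"
  then have "y - y' = \<tau> *\<^sub>R (D y - D y')" by (simp add: algebra_simps)
  then have "(norm (y - y'))\<^sup>2 = \<tau> * ((D y - D y') \<bullet> (y - y'))"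
    by (metis inner_scaleR_left power2_norm_eq_inner)
  also have "\<dots> \<le> \<tau> * L * (norm (y - y'))\<^sup>2"
    using mult_left_mono[OF lip[OF y] \<tau>(1)] by (simp add: mult.assoc)
  finally have "(1 - \<tau> * L) * (norm (y - y'))\<^sup>2 \<le> 0" by (simp add: algebra_simps)
  then show "y = y'" using \<tau>(2) by (simp add: mult_le_0_iff)
qed

lemma ellipsoid_invariant_under_injective_map:
  fixes A :: "real^'n^'n" and v :: "real^'n" and T :: "real^'n \<Rightarrow> real^'n"
  defines "C \<equiv> {y. gcon A v y \<le> 1}"
  assumes A_pd: "\<forall>y. y \<noteq> 0 \<longrightarrow> 0 < y \<bullet> (A *v y)"
    and cont: "continuous_on C T" and inj: "inj_on T C"
    and boundary: "\<And>z. gcon A v z = 1 \<Longrightarrow> gcon A v (T z) \<le> 1"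
    and x: "x \<in> C"
  shows "gcon A v (T x) \<le> 1"
proof -
  have "compact C" unfolding C_def by (rule compact_gcon_sublevel[OF A_pd])
  moreover have "continuous_on C (gcon A v \<circ> T)"
    by (intro continuous_on_compose cont continuous_at_imp_continuous_on) (simp add: isCont_gcon)
  ultimately obtain y where y: "y \<in> C" and max: "\<And>y'. y' \<in> C \<Longrightarrow> gcon A v (T y') \<le> gcon A v (T y)"
    using continuous_attains_sup[of C "gcon A v \<circ> T"] x by auto
  have "gcon A v (T y) \<le> 1"
  proof (cases "gcon A v y = 1")
    case False
    define U where "U = {y. gcon A v y < 1}"
    have UC: "U \<subseteq> C" by (auto simp: U_def C_def)
    have "open U"
      unfolding U_def by (rule open_Collect_less) (auto intro!: continuous_at_imp_continuous_on isCont_gcon)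
    then have "open (T ` U)"
      using continuous_on_subset[OF cont UC] inj_on_subset[OF inj UC] by (intro invariance_of_domain)
    then have "T ` U \<subseteq> interior (T ` C)" using UC by (intro interior_maximal image_mono)
    moreover have "y \<in> U" using False y by (simp add: U_def C_def)
    ultimately have "T y \<in> interior (T ` C)" by blast
    then have "gcon A v (T y) \<le> 0" by (rule gcon_le_0_at_interior_max) (auto intro: max)
    then show ?thesis by simp
  qed (rule boundary)
  then show ?thesis using max[OF x] by simp
qed

lemma Lconst_mono:
  fixes Q A :: "real^'n^'n"
  assumes Q_sym: "transpose Q = Q" and Q_psd: "\<forall>y. 0 \<le> y \<bullet> (Q *v y)"
    and A_sym: "transpose A = A" and A_pd: "\<forall>y. y \<noteq> 0 \<longrightarrow> 0 < y \<bullet> (A *v y)"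
    and m: "0 \<le> m" and k: "1 \<le> k" "k \<le> k'"
  shows "Lconst Q A m k \<le> Lconst Q A m k'"
  unfolding Lconst_def
proof (rule sv_max_mono_psd)
  note psdA = pd_imp_psd[OF A_pd]
  fix x y :: "real^'n"
  show "x \<bullet> ((Q + (m * (4 * real k - 2)) *\<^sub>R A) *v y) = y \<bullet> ((Q + (m * (4 * real k - 2)) *\<^sub>R A) *v x)"
    by (simp add: matrix_add_scaleR_vector inner_add_right
        symmetric_matrix_inner_commute[OF Q_sym, of x] symmetric_matrix_inner_commute[OF A_sym, of x])
  show "0 \<le> y \<bullet> ((Q + (m * (4 * real k - 2)) *\<^sub>R A) *v y)"
    using Q_psd psdA[of y] m k by (simp add: matrix_add_scaleR_vector inner_add_right)
  have "m * (4 * real k - 2) * (y \<bullet> (A *v y)) \<le> m * (4 * real k' - 2) * (y \<bullet> (A *v y))"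
    using m k psdA[of y] by (intro mult_right_mono mult_left_mono) auto
  then show "y \<bullet> ((Q + (m * (4 * real k - 2)) *\<^sub>R A) *v y) \<le> y \<bullet> ((Q + (m * (4 * real k' - 2)) *\<^sub>R A) *v y)"
    by (simp add: matrix_add_scaleR_vector inner_add_right)
qed

lemma gradient_step_in_ellipsoid:
  fixes Q A :: "real^'n^'n"
  assumes Q_sym: "transpose Q = Q" and Q_psd: "\<forall>y. 0 \<le> y \<bullet> (Q *v y)"
    and A_sym: "transpose A = A" and A_pd: "\<forall>y. y \<noteq> 0 \<longrightarrow> 0 < y \<bullet> (A *v y)"
    and m: "0 \<le> m"
    and req: "\<And>z. gcon A v z = 1 \<Longrightarrow>
      (norm (Jgrad Q q A v m 1 z))\<^sup>2 * norm (2 *\<^sub>R (A *v (z - v)))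
        \<le> 2 * rconst A * Lconst Q A m 1 * (Jgrad Q q A v m 1 z \<bullet> 2 *\<^sub>R (A *v (z - v)))"
    and k: "k \<ge> 1" and x: "gcon A v x \<le> 1"
    and \<gamma>: "0 < \<gamma>" "\<gamma> \<le> 1 / Lconst Q A m k"
  shows "gcon A v (x - \<gamma> *\<^sub>R Jgrad Q q A v m k x) \<le> 1"
proof -
  define L D where "L = Lconst Q A m k" and "D = Jgrad Q q A v m k"
  have L: "0 < L" using order_less_le_trans[OF \<gamma>] by (simp add: L_def)
  have boundary: "gcon A v (z - \<tau> *\<^sub>R D z) \<le> 1" if "0 \<le> \<tau>" "\<tau> * L \<le> 1" "gcon A v z = 1" for \<tau> z
  proof -
    have "Lconst Q A m 1 \<le> L"
      unfolding L_def using k by (rule Lconst_mono[OF Q_sym Q_psd A_sym A_pd m order_refl])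
    then have "\<tau> * Lconst Q A m 1 \<le> 1" using that by (meson mult_left_mono order_trans)
    moreover have "D z = Jgrad Q q A v m 1 z" using that(3) by (simp add: D_def Jgrad_def)
    moreover have "0 \<le> Lconst Q A m 1" by (simp add: Lconst_def sv_max_nonneg)
    ultimately show ?thesis
      using boundary_step_gcon_le_1[OF A_sym that(3) req[OF that(3)]] that(1) by simp
  qed
  have "gcon A v (x - \<tau> *\<^sub>R D x) \<le> 1" if \<tau>: "0 \<le> \<tau>" "\<tau> * L < 1" for \<tau>
  proof (rule ellipsoid_invariant_under_injective_map[OF A_pd, of v "\<lambda>y. y - \<tau> *\<^sub>R D y"])
    show "continuous_on {y. gcon A v y \<le> 1} (\<lambda>y. y - \<tau> *\<^sub>R D y)"
      unfolding D_def by (intro continuous_at_imp_continuous_on ballI continuous_intros isCont_Jgrad)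
    show "inj_on (\<lambda>y. y - \<tau> *\<^sub>R D y) {y. gcon A v y \<le> 1}"
      using Jgrad_one_sided_lipschitz[OF Q_sym A_sym A_pd m k] \<tau>
      by (intro inj_on_gradient_step) (auto simp: D_def L_def)
  qed (use boundary \<tau> x in auto)
  then have "{0..<1/L} \<subseteq> {\<tau>. gcon A v (x - \<tau> *\<^sub>R D x) \<le> 1}"
    using L by (auto simp: field_simps)
  moreover have "closed {\<tau>. gcon A v (x - \<tau> *\<^sub>R D x) \<le> 1}"
    by (intro closed_Collect_le continuous_on_const continuous_at_imp_continuous_on ballI
        continuous_intros isCont_o2[OF _ isCont_gcon])
  ultimately have "closure {0..<1/L} \<subseteq> {\<tau>. gcon A v (x - \<tau> *\<^sub>R D x) \<le> 1}"
    by (rule closure_minimal)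
  moreover have "\<gamma> \<in> closure {0..<1/L}" using L \<gamma> by (simp add: L_def)
  ultimately show ?thesis by (auto simp: D_def)
qed

theorem lemma5:
  fixes Q A :: "real^'n^'n" and q v :: "real^'n" and m :: real
    and x :: "nat \<Rightarrow> real^'n" and \<gamma> :: "nat \<Rightarrow> real"
  assumes Q_sym: "transpose Q = Q"
    and Q_psd: "\<forall>y. 0 \<le> y \<bullet> (Q *v y)"
    and A_sym: "transpose A = A"
    and A_pd: "\<forall>y. y \<noteq> 0 \<longrightarrow> 0 < y \<bullet> (A *v y)"
    and m_pos: "m > 0"
    and req2: "\<forall>y. gcon A v y = 1 \<longrightarrow>
        (let w = grad (fobj Q q) y + m *\<^sub>R grad (gcon A v) y in
          (norm w)\<^sup>2 * norm (grad (gcon A v) y)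
            \<le> 2 * rconst A * Lconst Q A m 1 * (w \<bullet> grad (gcon A v) y))"
    and x1: "gcon A v (x 1) \<le> 1"
    and iter: "\<forall>k\<ge>1. x (Suc k) = x k - \<gamma> k *\<^sub>R grad (Jpen Q q A v m k) (x k)"
    and step: "\<forall>k\<ge>1. 0 < \<gamma> k \<and> \<gamma> k \<le> 1 / Lconst Q A m k"
    and sq_summable: "summable (\<lambda>k. (\<gamma> k)\<^sup>2)"
    and not_summable: "\<not> summable \<gamma>"
  shows "summable (\<lambda>k. (\<gamma> (Suc k))\<^sup>2 * (norm (grad (Jpen Q q A v m (Suc k)) (x (Suc k))))\<^sup>2)"
proof -
  have req: "(norm (Jgrad Q q A v m 1 z))\<^sup>2 * norm (2 *\<^sub>R (A *v (z - v)))
      \<le> 2 * rconst A * Lconst Q A m 1 * (Jgrad Q q A v m 1 z \<bullet> 2 *\<^sub>R (A *v (z - v)))"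
    if "gcon A v z = 1" for z
    using req2[rule_format, OF that] by (simp add: Let_def grad_fobj[OF Q_sym] grad_gcon[OF A_sym] Jgrad_def mult_ac)
  have grad: "grad (Jpen Q q A v m k) y = Jgrad Q q A v m k y" if "k \<ge> 1" for k y
    by (rule grad_Jpen[OF Q_sym A_sym that])
  have in_C: "gcon A v (x k) \<le> 1" if "k \<ge> 1" for k
    using that
  proof (induction k rule: nat_induct_at_least)
    case (Suc k)
    then show ?case
      using gradient_step_in_ellipsoid[OF Q_sym Q_psd A_sym A_pd _ req] iter step m_pos
      by (simp add: grad less_imp_le)
  qed (rule x1)
  obtain B where B: "\<And>k y. gcon A v y \<le> 1 \<Longrightarrow> norm (Jgrad Q q A v m k y) \<le> B"
    using Jgrad_bounded_on_sublevel[OF A_pd] by blast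
  have bound: "norm ((\<gamma> (Suc k))\<^sup>2 * (norm (grad (Jpen Q q A v m (Suc k)) (x (Suc k))))\<^sup>2) \<le> B\<^sup>2 * (\<gamma> (Suc k))\<^sup>2" for k
  proof -
    have "(norm (Jgrad Q q A v m (Suc k) (x (Suc k))))\<^sup>2 \<le> B\<^sup>2"
      using B[OF in_C[of "Suc k"]] by (simp add: power_mono)
    then show ?thesis by (simp add: grad mult.commute[of "B\<^sup>2"] mult_left_mono)
  qed
  have "summable (\<lambda>k. B\<^sup>2 * (\<gamma> (Suc k))\<^sup>2)"
    using sq_summable summable_Suc_iff[of "\<lambda>k. (\<gamma> k)\<^sup>2"] by (simp add: summable_mult)
  then show ?thesis using bound by (rule summable_comparison_test')
qed

end
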